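(* Let $\mathcal{M}=(\mathbf{x},\mathbf{p})$ be an auction format satisfying voluntary participation, let $\boldsymbol{\pi}^{(1)},\dots,\boldsymbol{\pi}^{(n)}\in\Delta([K+1])$ be quantile strategies with $s_i:=s_{i,\boldsymbol{\pi}^{(i)}}$, and let $\tilde{\mathcal{M}}$ be the associated auxiliary auction. Let $\mathbf{e}:=(1,0,\dots,0)\in\mathbb{R}^{K+1}$. For $\mathbf{v}\sim\mathcal{D}$, set $\mathbf{b}_{-i}:=(s_\ell(v_\ell))_{\ell\neq i}$. Then \[ \sum_{i\in[n]}\mathbb{E}_{\mathbf{v}_{-i}}\Big[\mathbf{g}_i(\boldsymbol{\pi}^{(i)};\mathbf{b}_{-i})^{\top}\big(\mathbf{e}-\boldsymbol{\pi}^{(i)}\big)\Big]=\mathbb{E}_{\mathbf{v}\sim\mathcal{D}}\Big[\sum_{i\in[n]}p_i\big(s_1(v_1),\dots,s_n(v_n)\big)\Big]-\mathrm{Rev}_{\tilde{\mathcal{M}}}(\mathcal{D}). \]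
   Context: Each bidder $i\in[n]$ has value $v_i$ drawn independently from a continuous distribution $\mathcal{D}_i$ on $[0,1]$ with CDF $F_i$ and quantile function $F_i^{-1}(y):=\inf\{v\in[0,1]:F_i(v)\ge y\}$; $\mathcal{D}:=\mathcal{D}_1\times\cdots\times\mathcal{D}_n$. Bid set $B:=\{j/K:j=0,\dots,K\}$. An auction format is $(\mathbf{x},\mathbf{p})$, $\mathbf{x}:B^n\to\Delta([n])$ (nonnegative entries summing to at most 1), $\mathbf{p}:B^n\to[0,1]^n$; voluntary participation means $p_i(0,\mathbf{b}_{-i})=0$ for all $i$ and $\mathbf{b}_{-i}\in B^{n-1}$. For $\boldsymbol{\pi}\in\Delta([K+1])$ (probability simplex), $\Pi_0:=0$, $\Pi_j:=\sum_{\ell\le j}\pi_\ell$; $s_{i,\boldsymbol{\pi}}$ bids $0$ on $[0,F_i^{-1}(\Pi_1)]$ and $\frac{j-1}{K}$ on $(F_i^{-1}(\Pi_{j-1}),F_i^{-1}(\Pi_j)]$ for $j=2,\dots,K+1$. For $\mathbf{b}_{-i}\in B^{n-1}$, the vector $\mathbf{g}_i(\boldsymbol{\pi};\mathbf{b}_{-i})\in\mathbb{R}^{K+1}$ (the gradient of bidder $i$'s quantile utility) has entries \[ g_{i,k}(\boldsymbol{\pi};\mathbf{b}_{-i}):=\sum_{j=k}^{K}\Big(x_i\big(\tfrac{j-1}{K},\mathbf{b}_{-i}\big)-x_i\big(\tfrac{j}{K},\mathbf{b}_{-i}\big)\Big)F_i^{-1}(\Pi_j)+x_i(1,\mathbf{b}_{-i})-p_i\big(\tfrac{k-1}{K},\mathbf{b}_{-i}\big),\quad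 k\in[K+1]. \] The auxiliary auction $\tilde{\mathcal{M}}=(\tilde{\mathbf{x}},\tilde{\mathbf{p}})$ on $[0,1]^n$: $\tilde{\mathbf{x}}(\mathbf{v}):=\mathbf{x}(s_1(v_1),\dots,s_n(v_n))$, $\tilde p_i(\mathbf{v}):=\tilde x_i(v_i,\mathbf{v}_{-i})v_i-\int_0^{v_i}\tilde x_i(z,\mathbf{v}_{-i})dz$; $\mathrm{Rev}_{\tilde{\mathcal{M}}}(\mathcal{D}):=\mathbb{E}_{\mathbf{v}\sim\mathcal{D}}[\sum_i\tilde p_i(\mathbf{v})]$. *)

theory Defs
  imports "HOL-Probability.Probability"
begin

(* Bidders are indexed by {..<n} (0-based); quantile-strategy coordinates
   are indexed by {1..K+1} as in the paper. Bids are real numbers j/K. *)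

definition bidset :: "nat \<Rightarrow> real set" where
  "bidset K = {real j / real K | j. j \<le> K}"

definition bid_profiles :: "nat \<Rightarrow> nat \<Rightarrow> (nat \<Rightarrow> real) set" where
  "bid_profiles n K = {b. (\<forall>i<n. b i \<in> bidset K) \<and> (\<forall>i. n \<le> i \<longrightarrow> b i = 0)}"

definition auction_format ::
  "nat \<Rightarrow> nat \<Rightarrow> (nat \<Rightarrow> (nat \<Rightarrow> real) \<Rightarrow> real) \<Rightarrow> (nat \<Rightarrow> (nat \<Rightarrow> real) \<Rightarrow> real) \<Rightarrow> bool" where
  "auction_format n K x p \<longleftrightarrow>
     (\<forall>b\<in>bid_profiles n K. (\<forall>i<n. 0 \<le> x i b) \<and> (\<Sum>i<n. x i b) \<le> 1 \<and>
                           (\<forall>i<n. 0 \<le> p i b \<and> p i b \<le> 1))"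

definition voluntary_participation ::
  "nat \<Rightarrow> nat \<Rightarrow> (nat \<Rightarrow> (nat \<Rightarrow> real) \<Rightarrow> real) \<Rightarrow> bool" where
  "voluntary_participation n K p \<longleftrightarrow> (\<forall>i<n. \<forall>b\<in>bid_profiles n K. p i (b(i := 0)) = 0)"

definition value_distribution :: "real measure \<Rightarrow> bool" where
  "value_distribution M \<longleftrightarrow> prob_space M \<and> sets M = sets borel \<and>
     measure M {0..1} = 1 \<and> (\<forall>v. isCont (cdf M) v)"

definition quantile :: "real measure \<Rightarrow> real \<Rightarrow> real" where
  "quantile M y = Inf {v \<in> {0..1}. y \<le> cdf M v}"

definition prob_simplex :: "nat \<Rightarrow> (nat \<Rightarrow> real) \<Rightarrow> bool" where
  "prob_simplex K \<pi> \<longleftrightarrow> (\<forall>k\<in>{1..K+1}. 0 \<le> \<pi> k) \<and> (\<Sum>k=1..K+1. \<pi> k) = 1"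

definition cum :: "(nat \<Rightarrow> real) \<Rightarrow> nat \<Rightarrow> real" where
  "cum \<pi> j = (\<Sum>l=1..j. \<pi> l)"

definition quantile_strategy :: "nat \<Rightarrow> real measure \<Rightarrow> (nat \<Rightarrow> real) \<Rightarrow> real \<Rightarrow> real" where
  "quantile_strategy K M \<pi> v =
     (if v \<le> quantile M (cum \<pi> 1) then 0
      else (\<Sum>j=2..K+1. if quantile M (cum \<pi> (j - 1)) < v \<and> v \<le> quantile M (cum \<pi> j)
                         then real (j - 1) / real K else 0))"

(* g_{i,k}(pi; b_{-i}); the i-th entry of b is irrelevant (overwritten) *)
definition grad ::
  "nat \<Rightarrow> (nat \<Rightarrow> (nat \<Rightarrow> real) \<Rightarrow> real) \<Rightarrow> (nat \<Rightarrow> (nat \<Rightarrow> real) \<Rightarrow> real) \<Rightarrow> real measure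
   \<Rightarrow> (nat \<Rightarrow> real) \<Rightarrow> nat \<Rightarrow> (nat \<Rightarrow> real) \<Rightarrow> nat \<Rightarrow> real" where
  "grad K x p M \<pi> i b k =
     (\<Sum>j=k..K. (x i (b(i := real (j - 1) / real K)) - x i (b(i := real j / real K)))
                 * quantile M (cum \<pi> j))
     + x i (b(i := 1)) - p i (b(i := real (k - 1) / real K))"

definition bid_profile_of ::
  "nat \<Rightarrow> (nat \<Rightarrow> real \<Rightarrow> real) \<Rightarrow> (nat \<Rightarrow> real) \<Rightarrow> nat \<Rightarrow> real" where
  "bid_profile_of n s v = (\<lambda>l. if l < n then s l (v l) else 0)"

definition aux_alloc ::
  "nat \<Rightarrow> (nat \<Rightarrow> (nat \<Rightarrow> real) \<Rightarrow> real) \<Rightarrow> (nat \<Rightarrow> real \<Rightarrow> real) \<Rightarrow> nat \<Rightarrow> (nat \<Rightarrow> real) \<Rightarrow> real" where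
  "aux_alloc n x s i v = x i (bid_profile_of n s v)"

definition aux_pay ::
  "nat \<Rightarrow> (nat \<Rightarrow> (nat \<Rightarrow> real) \<Rightarrow> real) \<Rightarrow> (nat \<Rightarrow> real \<Rightarrow> real) \<Rightarrow> nat \<Rightarrow> (nat \<Rightarrow> real) \<Rightarrow> real" where
  "aux_pay n x s i v = aux_alloc n x s i v * v i - (LBINT z=0..v i. aux_alloc n x s i (v(i := z)))"

definition aux_revenue ::
  "nat \<Rightarrow> (nat \<Rightarrow> (nat \<Rightarrow> real) \<Rightarrow> real) \<Rightarrow> (nat \<Rightarrow> real \<Rightarrow> real) \<Rightarrow> (nat \<Rightarrow> real measure) \<Rightarrow> real" where
  "aux_revenue n x s D = (\<integral>v. (\<Sum>i<n. aux_pay n x s i v) \<partial>(PiM {..<n} D))"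

end

theory Submission
  imports Defs
begin

(* Fix bidder i and the other bids. With thresholds q_j = F_i^{-1}(Pi_j), the quantile strategy
   is a step function of the value, so any function h of bidder i's own bid equals h 0 plus the
   jumps h(s_j) - h(s_{j-1}) over all j with q_j < v_i, where s_j is the bid on the j-th step.
   Hence p_i minus the auxiliary payment x_i v_i - int_0^{v_i} x_i is the sum, over q_j < v_i, of
   the jump of p_i minus q_j times the jump of x_i.  Since F_i(q_j) = Pi_j, integrating out v_i
   weights the j-th term by 1 - Pi_j, and Abel summation turns this into g_i(pi)^T (e - pi).
   Fubini over v_{-i} and summation over i give the theorem. *)

lemma value_distribution_real_distribution:
  "value_distribution M \<Longrightarrow> real_distribution M"
  unfolding value_distribution_def real_distribution_def real_distribution_axioms_def by auto

lemma cdf_value_distribution_1: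
  assumes "value_distribution M"
  shows "cdf M 1 = 1"
proof -
  interpret real_distribution M
    using assms by (rule value_distribution_real_distribution)
  have "measure M {0..1} \<le> cdf M 1"
    unfolding cdf_def by (intro finite_measure_mono) auto
  then show ?thesis
    using assms cdf_bounded_prob[of 1] unfolding value_distribution_def by linarith
qed

lemma cdf_value_distribution_0:
  assumes "value_distribution M"
  shows "cdf M 0 = 0"
proof -
  interpret real_distribution M
    using assms by (rule value_distribution_real_distribution)
  have "measure M (UNIV - {0..1}) = 0"
    using assms prob_compl[of "{0..1}"] unfolding value_distribution_def by simp
  moreover have "measure M {0} = 0"
    using assms isCont_cdf unfolding value_distribution_def by blast
  moreover have "cdf M 0 \<le> measure M (UNIV - {0..1}) + measure M {0}"
    unfolding cdf_def by (rule order_trans[OF finite_measure_mono measure_Un_le]) auto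
  ultimately show ?thesis
    using cdf_nonneg[of 0] by linarith
qed

lemma quantile_mono:
  assumes "value_distribution M" "y \<le> y'" "y' \<le> 1"
  shows "quantile M y \<le> quantile M y'"
  unfolding quantile_def
proof (rule cInf_superset_mono)
  show "{v \<in> {0..1}. y' \<le> cdf M v} \<noteq> {}"
    using assms cdf_value_distribution_1[OF assms(1)] by force
qed (use assms in auto)

lemma quantile_bounds:
  assumes "value_distribution M" "y \<le> 1"
  shows "0 \<le> quantile M y" "quantile M y \<le> 1"
proof -
  have "1 \<in> {v \<in> {0..1}. y \<le> cdf M v}"
    using assms cdf_value_distribution_1[OF assms(1)] by simp
  then show "0 \<le> quantile M y" "quantile M y \<le> 1"
    unfolding quantile_def by (auto intro!: cInf_greatest cInf_lower bdd_belowI[of _ 0])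
qed

lemma cdf_quantile:
  assumes vd: "value_distribution M" and y: "0 \<le> y" "y \<le> 1"
  shows "cdf M (quantile M y) = y"
proof -
  interpret real_distribution M
    using vd by (rule value_distribution_real_distribution)
  have cont: "\<And>v. isCont (cdf M) v"
    using vd unfolding value_distribution_def by auto
  define S where "S = {v \<in> {0..1}. y \<le> cdf M v}"
  obtain w where w: "0 \<le> w" "w \<le> 1" "cdf M w = y"
    using IVT[of "cdf M" 0 y 1] cdf_value_distribution_0[OF vd] cdf_value_distribution_1[OF vd] y cont
    by auto
  have "w \<in> S" and bdd: "bdd_below S"
    using w by (auto simp: S_def intro: bdd_belowI[of _ 0])
  have "S = {0..1} \<inter> {v. y \<le> cdf M v}"
    by (auto simp: S_def)
  then have "closed S"
    by (auto intro!: closed_Int closed_Collect_le continuous_at_imp_continuous_on cont)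
  then have "Inf S \<in> S"
    using closed_contains_Inf[OF _ bdd] \<open>w \<in> S\<close> by auto
  moreover have "cdf M (Inf S) \<le> y"
    using cdf_nondecreasing[OF cInf_lower[OF \<open>w \<in> S\<close> bdd]] w by simp
  ultimately show ?thesis
    unfolding quantile_def S_def[symmetric] by (auto simp: S_def)
qed

lemma cum_mono:
  assumes "prob_simplex K \<pi>" "j \<le> j'" "j' \<le> K + 1"
  shows "cum \<pi> j \<le> cum \<pi> j'"
  unfolding cum_def
  using assms by (intro sum_mono2) (auto simp: prob_simplex_def)

lemma cum_top: "prob_simplex K \<pi> \<Longrightarrow> cum \<pi> (K + 1) = 1"
  unfolding prob_simplex_def cum_def by simp

lemma cum_bounds:
  assumes "prob_simplex K \<pi>" "j \<le> K + 1"
  shows "0 \<le> cum \<pi> j" "cum \<pi> j \<le> 1"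
  using cum_mono[OF assms(1), of 0 j] cum_mono[OF assms(1), of j "K + 1"] assms cum_top[OF assms(1)]
  by (auto simp: cum_def)

lemma quantile_cum_mono:
  assumes "value_distribution M" "prob_simplex K \<pi>"
  shows "mono_on {..K + 1} (\<lambda>j. quantile M (cum \<pi> j))"
  using assms by (intro mono_onI quantile_mono cum_mono cum_bounds) auto

(* The bid of a quantile strategy for values in (F^{-1}(Pi_j), F^{-1}(Pi_{j+1})]; above
   F^{-1}(Pi_{K+1}) the strategy bids 0 again, whence step_bid K (K + 1) = 0. *)
definition step_bid :: "nat \<Rightarrow> nat \<Rightarrow> real" where
  "step_bid K j = (if j \<le> K then real j / real K else 0)"

definition bid_jump :: "nat \<Rightarrow> (real \<Rightarrow> 'a::ab_group_add) \<Rightarrow> nat \<Rightarrow> 'a" where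
  "bid_jump K h j = h (step_bid K j) - h (step_bid K (j - 1))"

lemma step_bid_0 [simp]: "step_bid K 0 = 0"
  by (simp add: step_bid_def)

lemma step_bid_mem_bidset: "step_bid K j \<in> bidset K"
  unfolding step_bid_def bidset_def by (cases "j \<le> K") auto

lemma sum_bid_jump: "(\<Sum>j=1..N. bid_jump K h j) = h (step_bid K N) - h 0"
  by (induction N) (simp_all add: bid_jump_def)

lemma below_iff_le_card_below:
  fixes q :: "nat \<Rightarrow> 'a::linorder"
  assumes mono: "mono_on {..m} q" and j: "j \<in> {1..m}"
  shows "q j < z \<longleftrightarrow> j \<le> card {i \<in> {1..m}. q i < z}"
proof -
  define S where "S = {i \<in> {1..m}. q i < z}"
  have "S = {1..card S}"
  proof (cases "S = {}")
    case False
    have "finite S" by (simp add: S_def)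
    have "S = {1..Max S}"
    proof
      show "S \<subseteq> {1..Max S}"
        using \<open>finite S\<close> by (auto simp: S_def)
      have "Max S \<in> S"
        using \<open>finite S\<close> False by (rule Max_in)
      show "{1..Max S} \<subseteq> S"
      proof
        fix i assume "i \<in> {1..Max S}"
        with \<open>Max S \<in> S\<close> have "i \<in> {1..m}" "q i \<le> q (Max S)" "q (Max S) < z"
          using mono_onD[OF mono, of i "Max S"] by (auto simp: S_def)
        then show "i \<in> S" by (simp add: S_def)
      qed
    qed
    moreover have "card {1..Max S} = Max S" by simp
    ultimately show ?thesis by simp
  qed simp
  have "q j < z \<longleftrightarrow> j \<in> S"
    using j by (simp add: S_def)
  also have "\<dots> \<longleftrightarrow> j \<in> {1..card S}"
    using \<open>S = {1..card S}\<close> by blast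
  finally show ?thesis
    using j unfolding S_def by simp
qed

lemma card_below_le: "card {j \<in> {1..m}. P j} \<le> m"
proof -
  have "card {j \<in> {1..m}. P j} \<le> card {1..m}"
    by (intro card_mono) auto
  then show ?thesis by simp
qed

lemma quantile_strategy_eq_step_bid:
  assumes "value_distribution M" "prob_simplex K \<pi>"
  shows "quantile_strategy K M \<pi> z = step_bid K (card {j \<in> {1..K + 1}. quantile M (cum \<pi> j) < z})"
proof -
  let ?q = "\<lambda>j. quantile M (cum \<pi> j)"
  define N where "N = card {j \<in> {1..K + 1}. ?q j < z}"
  have below: "?q j < z \<longleftrightarrow> j \<le> N" if "j \<in> {1..K + 1}" for j
    unfolding N_def using below_iff_le_card_below[OF quantile_cum_mono[OF assms] that] .
  have "N \<le> K + 1"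
    unfolding N_def by (rule card_below_le)
  show ?thesis
  proof (cases "N = 0")
    case True
    then show ?thesis
      unfolding N_def[symmetric] using below[of 1] by (simp add: quantile_strategy_def)
  next
    case False
    have "(\<Sum>j=2..K+1. if ?q (j - 1) < z \<and> z \<le> ?q j then real (j - 1) / real K else 0)
        = (\<Sum>j=2..K+1. if j = N + 1 then real N / real K else 0)"
    proof (intro sum.cong refl)
      fix j assume "j \<in> {2..K+1}"
      then have "j - 1 \<in> {1..K + 1}" "j \<in> {1..K + 1}"
        by auto
      then have "?q (j - 1) < z \<longleftrightarrow> j - 1 \<le> N" "?q j < z \<longleftrightarrow> j \<le> N"
        using below by blast+
      then show "(if ?q (j - 1) < z \<and> z \<le> ?q j then real (j - 1) / real K else 0)
          = (if j = N + 1 then real N / real K else 0)"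
        by (auto simp: not_le)
    qed
    also have "\<dots> = step_bid K N"
      using False \<open>N \<le> K + 1\<close> by (simp add: step_bid_def)
    finally show ?thesis
      unfolding N_def[symmetric] using below[of 1] False by (simp add: quantile_strategy_def)
  qed
qed

lemma quantile_strategy_mem_bidset:
  "value_distribution M \<Longrightarrow> prob_simplex K \<pi> \<Longrightarrow> quantile_strategy K M \<pi> z \<in> bidset K"
  by (simp add: quantile_strategy_eq_step_bid step_bid_mem_bidset)

lemma fun_quantile_strategy_eq_sum_jumps:
  assumes "value_distribution M" "prob_simplex K \<pi>"
  shows "h (quantile_strategy K M \<pi> z)
       = h 0 + (\<Sum>j=1..K+1. if quantile M (cum \<pi> j) < z then bid_jump K h j else 0)"
proof -
  define N where "N = card {j \<in> {1..K + 1}. quantile M (cum \<pi> j) < z}"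
  have "N \<le> K + 1"
    unfolding N_def by (rule card_below_le)
  have "(\<Sum>j=1..K+1. if quantile M (cum \<pi> j) < z then bid_jump K h j else 0)
      = (\<Sum>j=1..K+1. if j \<le> N then bid_jump K h j else 0)"
    unfolding N_def using below_iff_le_card_below[OF quantile_cum_mono[OF assms]]
    by (intro sum.cong refl) presburger
  also have "\<dots> = (\<Sum>j=1..N. bid_jump K h j)"
    using \<open>N \<le> K + 1\<close> by (intro sum.mono_neutral_cong_right) auto
  finally show ?thesis
    unfolding quantile_strategy_eq_step_bid[OF assms] N_def[symmetric] sum_bid_jump by simp
qed

lemma abel_summation_unit_minus_weights:
  fixes c \<pi> :: "nat \<Rightarrow> real"
  shows "(\<Sum>k=1..K+1. c k * ((if k = 1 then 1 else 0) - \<pi> k))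
       = c 1 * (1 - cum \<pi> (K + 1)) + (\<Sum>j=1..K. (c j - c (j + 1)) * (cum \<pi> (K + 1) - cum \<pi> j))"
proof (induction K)
  case 0
  then show ?case by (simp add: cum_def)
next
  case (Suc K)
  let ?S = "\<Sum>j=1..K. (c j - c (j + 1)) * (cum \<pi> (K + 1) - cum \<pi> j)"
  have cum_Suc: "cum \<pi> (Suc K + 1) = cum \<pi> (K + 1) + \<pi> (K + 2)"
    by (simp add: cum_def)
  have telescope: "(\<Sum>j=1..K. c j - c (j + 1)) = c 1 - c (K + 1)"
    by (induction K) simp_all
  have "(\<Sum>j=1..Suc K. (c j - c (j + 1)) * (cum \<pi> (Suc K + 1) - cum \<pi> j))
      = (\<Sum>j=1..K. (c j - c (j + 1)) * (cum \<pi> (K + 1) - cum \<pi> j) + \<pi> (K + 2) * (c j - c (j + 1)))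
        + (c (K + 1) - c (K + 2)) * \<pi> (K + 2)"
    unfolding cum_Suc by (simp add: algebra_simps)
  also have "\<dots> = ?S + \<pi> (K + 2) * (\<Sum>j=1..K. c j - c (j + 1)) + (c (K + 1) - c (K + 2)) * \<pi> (K + 2)"
    by (simp only: sum.distrib sum_distrib_left)
  also have "\<dots> = ?S + \<pi> (K + 2) * (c 1 - c (K + 1)) + (c (K + 1) - c (K + 2)) * \<pi> (K + 2)"
    unfolding telescope ..
  finally have rhs: "(\<Sum>j=1..Suc K. (c j - c (j + 1)) * (cum \<pi> (Suc K + 1) - cum \<pi> j))
      = ?S + \<pi> (K + 2) * (c 1 - c (K + 1)) + (c (K + 1) - c (K + 2)) * \<pi> (K + 2)" .
  have lhs: "(\<Sum>k=1..Suc K+1. c k * ((if k = 1 then 1 else 0) - \<pi> k))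
      = (\<Sum>k=1..K+1. c k * ((if k = 1 then 1 else 0) - \<pi> k)) - c (K + 2) * \<pi> (K + 2)"
    by simp
  show ?case
    unfolding lhs rhs unfolding Suc.IH cum_Suc by (simp add: algebra_simps)
qed

lemma grad_inner_unit_minus_weights:
  assumes "cum \<pi> (K + 1) = 1"
  shows "(\<Sum>k=1..K+1. grad K x p M \<pi> i b k * ((if k = 1 then 1 else 0) - \<pi> k))
       = (\<Sum>j=1..K+1. (bid_jump K (\<lambda>t. p i (b(i := t))) j
                        - bid_jump K (\<lambda>t. x i (b(i := t))) j * quantile M (cum \<pi> j))
                      * (1 - cum \<pi> j))"
proof -
  let ?c = "grad K x p M \<pi> i b"
  let ?a = "\<lambda>j. bid_jump K (\<lambda>t. p i (b(i := t))) j
                 - bid_jump K (\<lambda>t. x i (b(i := t))) j * quantile M (cum \<pi> j)"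
  have diff: "?c j - ?c (j + 1) = ?a j" if "j \<in> {1..K}" for j
    using that by (auto simp: grad_def bid_jump_def step_bid_def sum.atLeast_Suc_atMost algebra_simps)
  have "(\<Sum>k=1..K+1. ?c k * ((if k = 1 then 1 else 0) - \<pi> k))
      = ?c 1 * (1 - cum \<pi> (K + 1)) + (\<Sum>j=1..K. (?c j - ?c (j + 1)) * (cum \<pi> (K + 1) - cum \<pi> j))"
    by (rule abel_summation_unit_minus_weights)
  also have "\<dots> = (\<Sum>j=1..K. ?a j * (1 - cum \<pi> j))"
    using assms diff by simp
  also have "\<dots> = (\<Sum>j=1..K+1. ?a j * (1 - cum \<pi> j))"
    using assms by simp
  finally show ?thesis .
qed

lemma (in real_distribution) integral_threshold_sum:
  assumes "finite A"
  shows "(\<integral>y. (\<Sum>j\<in>A. if q j < y then c j else 0) \<partial>M) = (\<Sum>j\<in>A. c j * (1 - cdf M (q j)))"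
proof -
  have "(\<integral>y. (\<Sum>j\<in>A. if q j < y then c j else 0) \<partial>M) = (\<integral>y. (\<Sum>j\<in>A. c j * indicator {q j<..} y) \<partial>M)"
    by (intro Bochner_Integration.integral_cong sum.cong) (auto simp: indicator_def)
  also have "\<dots> = (\<Sum>j\<in>A. c j * measure M {q j<..})"
    by (subst Bochner_Integration.integral_sum)
       (auto intro!: integrable_real_indicator simp: less_top[symmetric])
  also have "\<dots> = (\<Sum>j\<in>A. c j * (1 - cdf M (q j)))"
    using prob_compl[of "{..q _}"] by (simp add: cdf_def Compl_eq_Diff_UNIV[symmetric] not_le)
  finally show ?thesis .
qed

lemma interval_integral_threshold_sum:
  fixes q d :: "'j \<Rightarrow> real"
  assumes "finite A" and q: "\<And>j. j \<in> A \<Longrightarrow> 0 \<le> q j"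
  shows "(LBINT z=0..t. c + (\<Sum>j\<in>A. if q j < z then d j else 0))
       = c * t + (\<Sum>j\<in>A. d j * max 0 (t - q j))"
proof (cases "0 \<le> t")
  case True
  have "indicator {0..t} z * (c + (\<Sum>j\<in>A. if q j < z then d j else 0))
      = c * indicator {0..t} z + (\<Sum>j\<in>A. d j * indicator {q j<..t} z)" for z :: real
  proof (cases "z \<in> {0..t}")
    case False
    then have "indicator {q j<..t} z = (0::real)" if "j \<in> A" for j
      using q[OF that] by auto
    with False show ?thesis by simp
  qed (auto simp: indicator_def sum_distrib_left intro!: sum.cong)
  moreover have "(LBINT z=0..t. c + (\<Sum>j\<in>A. if q j < z then d j else 0))
      = (LBINT z:{0..t}. c + (\<Sum>j\<in>A. if q j < z then d j else 0))"
    using interval_integral_Icc[of 0 t] True by (simp add: zero_ereal_def)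
  ultimately have integral_eq: "(LBINT z=0..t. c + (\<Sum>j\<in>A. if q j < z then d j else 0))
      = (\<integral>z. c * indicator {0..t} z + (\<Sum>j\<in>A. d j * indicator {q j<..t} z) \<partial>lborel)"
    by (simp add: set_lebesgue_integral_def)
  have "emeasure lborel {a<..b} < \<infinity>" "measure lborel {a<..b} = max 0 (b - a)" for a b :: real
    by (cases "a \<le> b"; simp)+
  then have "(LBINT z=0..t. c + (\<Sum>j\<in>A. if q j < z then d j else 0))
      = c * t + (\<Sum>j\<in>A. d j * measure lborel {q j<..t})"
    unfolding integral_eq using True
    by (subst Bochner_Integration.integral_add)
       (auto intro!: integrable_sum integrable_real_indicator simp: Bochner_Integration.integral_sum)
  then show ?thesis
    by (simp add: \<open>measure lborel {_<.._} = _\<close>)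
next
  case False
  have "(LBINT z=0..t. c + (\<Sum>j\<in>A. if q j < z then d j else 0)) = (LBINT z=0..t. c)"
  proof (rule interval_integral_cong)
    fix z assume "z \<in> einterval (min 0 (ereal t)) (max 0 (ereal t))"
    then have "z < 0"
      using False by (auto simp: einterval_iff min_def max_def zero_ereal_def)
    then show "c + (\<Sum>j\<in>A. if q j < z then d j else 0) = c"
      using q by (force intro!: sum.neutral)
  qed
  moreover have "(LBINT z=0..t. c) = c * t"
    using interval_integral_const(2)[of 0 t c] by (simp add: zero_ereal_def)
  moreover have "max 0 (t - q j) = 0" if "j \<in> A" for j
    using False q[OF that] by simp
  ultimately show ?thesis
    by simp
qed

lemma quantile_strategy_payment_identity:
  fixes hP hX :: "real \<Rightarrow> real"
  assumes vd: "value_distribution M" and ps: "prob_simplex K \<pi>" and hP0: "hP 0 = 0"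
  defines "\<sigma> \<equiv> quantile_strategy K M \<pi>" and "q \<equiv> \<lambda>j. quantile M (cum \<pi> j)"
  shows "hP (\<sigma> t) - (hX (\<sigma> t) * t - (LBINT z=0..t. hX (\<sigma> z)))
       = (\<Sum>j=1..K+1. if q j < t then bid_jump K hP j - bid_jump K hX j * q j else 0)"
proof -
  have X: "hX (\<sigma> z) = hX 0 + (\<Sum>j=1..K+1. if q j < z then bid_jump K hX j else 0)" for z
    unfolding \<sigma>_def q_def by (rule fun_quantile_strategy_eq_sum_jumps[OF vd ps])
  have P: "hP (\<sigma> t) = (\<Sum>j=1..K+1. if q j < t then bid_jump K hP j else 0)"
    unfolding \<sigma>_def q_def using fun_quantile_strategy_eq_sum_jumps[OF vd ps, of hP] hP0 by simp
  have "0 \<le> q j" if "j \<in> {1..K+1}" for j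
    unfolding q_def using that cum_bounds[OF ps] by (intro quantile_bounds vd) auto
  then have integral: "(LBINT z=0..t. hX (\<sigma> z))
      = hX 0 * t + (\<Sum>j=1..K+1. bid_jump K hX j * max 0 (t - q j))"
    unfolding X by (intro interval_integral_threshold_sum) auto
  have "hX (\<sigma> t) * t - (LBINT z=0..t. hX (\<sigma> z))
      = (\<Sum>j=1..K+1. if q j < t then bid_jump K hX j else 0) * t
        - (\<Sum>j=1..K+1. bid_jump K hX j * max 0 (t - q j))"
    unfolding integral unfolding X[of t] by (simp add: algebra_simps)
  also have "\<dots> = (\<Sum>j=1..K+1. (if q j < t then bid_jump K hX j else 0) * t
                                  - bid_jump K hX j * max 0 (t - q j))"
    by (simp only: sum_distrib_right sum_subtractf)
  also have "\<dots> = (\<Sum>j=1..K+1. if q j < t then bid_jump K hX j * q j else 0)"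
    by (intro sum.cong) (auto simp: max_def algebra_simps)
  finally show ?thesis
    unfolding P by (simp add: sum_subtractf[symmetric] if_distrib cong: if_cong)
qed

lemma integral_PiM_fun_upd:
  fixes f :: "('i \<Rightarrow> 'a) \<Rightarrow> 'b::{banach, second_countable_topology}"
  assumes "finite I" "i \<in> I" "\<And>l. l \<in> I \<Longrightarrow> sigma_finite_measure (D l)"
    and "integrable (PiM I D) f"
  shows "(\<integral>v. f v \<partial>PiM I D) = (\<integral>v. (\<integral>y. f (v(i := y)) \<partial>D i) \<partial>PiM (I - {i}) D)"
proof -
  \<comment> \<open>The product locale wants every factor sigma-finite, also those outside I.\<close>
  define D' where "D' l = (if l \<in> I then D l else count_space {})" for l
  have "product_sigma_finite D'"
    unfolding product_sigma_finite_def D'_def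
    using assms(3) sigma_finite_measure_count_space_finite[of "{} :: 'a set"] by simp
  then interpret product_sigma_finite D' .
  have "PiM I D = PiM (insert i (I - {i})) D'"
    using assms(2) by (intro PiM_cong) (auto simp: D'_def)
  moreover have "PiM (I - {i}) D = PiM (I - {i}) D'"
    by (intro PiM_cong) (auto simp: D'_def)
  moreover have "D i = D' i"
    using assms(2) by (simp add: D'_def)
  ultimately show ?thesis
    using product_integral_insert[of "I - {i}" i f] assms(1,4) by simp
qed

lemma finite_bid_profiles: "finite (bid_profiles n K)"
proof -
  have "bidset K = (\<lambda>j. real j / real K) ` {..K}"
    unfolding bidset_def by auto
  then have "finite {b. \<forall>i. (i \<in> {..<n} \<longrightarrow> b i \<in> bidset K) \<and> (i \<notin> {..<n} \<longrightarrow> b i = 0)}"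
    by (intro finite_set_of_finite_funs) auto
  moreover have "bid_profiles n K
      = {b. \<forall>i. (i \<in> {..<n} \<longrightarrow> b i \<in> bidset K) \<and> (i \<notin> {..<n} \<longrightarrow> b i = 0)}"
    unfolding bid_profiles_def lessThan_iff not_less[symmetric] by blast
  ultimately show ?thesis by simp
qed

lemma borel_measurable_quantile_strategy: "quantile_strategy K M \<pi> \<in> borel_measurable borel"
  unfolding quantile_strategy_def by measurable

locale quantile_bidding =
  fixes n K :: nat
    and D :: "nat \<Rightarrow> real measure"
    and x p :: "nat \<Rightarrow> (nat \<Rightarrow> real) \<Rightarrow> real"
    and \<pi> :: "nat \<Rightarrow> nat \<Rightarrow> real"
  assumes value_distribution: "\<And>i. i < n \<Longrightarrow> value_distribution (D i)"
    and auction_format: "auction_format n K x p"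
    and voluntary_participation: "voluntary_participation n K p"
    and prob_simplex: "\<And>i. i < n \<Longrightarrow> prob_simplex K (\<pi> i)"
begin

abbreviation strategy :: "nat \<Rightarrow> real \<Rightarrow> real" where
  "strategy \<equiv> \<lambda>l. quantile_strategy K (D l) (\<pi> l)"

abbreviation bids :: "(nat \<Rightarrow> real) \<Rightarrow> nat \<Rightarrow> real" where
  "bids \<equiv> bid_profile_of n strategy"

abbreviation threshold :: "nat \<Rightarrow> nat \<Rightarrow> real" where
  "threshold i j \<equiv> quantile (D i) (cum (\<pi> i) j)"

abbreviation directional_grad :: "nat \<Rightarrow> (nat \<Rightarrow> real) \<Rightarrow> real" where
  "directional_grad i v \<equiv>
     \<Sum>k=1..K+1. grad K x p (D i) (\<pi> i) i (bids v) k * ((if k = 1 then 1 else 0) - \<pi> i k)"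

definition jump_coeff :: "nat \<Rightarrow> (nat \<Rightarrow> real) \<Rightarrow> nat \<Rightarrow> real" where
  "jump_coeff i b j =
     bid_jump K (\<lambda>t. p i (b(i := t))) j - bid_jump K (\<lambda>t. x i (b(i := t))) j * threshold i j"

definition payment_gap :: "nat \<Rightarrow> (nat \<Rightarrow> real) \<Rightarrow> real" where
  "payment_gap i v = (\<Sum>j=1..K+1. if threshold i j < v i then jump_coeff i (bids v) j else 0)"

lemma bids_mem_bid_profiles: "bids v \<in> bid_profiles n K"
  using quantile_strategy_mem_bidset[OF value_distribution prob_simplex]
  by (auto simp: bid_profile_of_def bid_profiles_def)

lemma bids_fun_upd: "i < n \<Longrightarrow> bids (v(i := y)) = (bids v)(i := strategy i y)"
  by (auto simp: bid_profile_of_def)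

lemma fun_upd_mem_bid_profiles:
  "b \<in> bid_profiles n K \<Longrightarrow> i < n \<Longrightarrow> t \<in> bidset K \<Longrightarrow> b(i := t) \<in> bid_profiles n K"
  by (auto simp: bid_profiles_def)

lemma jump_coeff_fun_upd [simp]: "jump_coeff i (b(i := t)) j = jump_coeff i b j"
  by (simp add: jump_coeff_def)

lemma aux_pay_eq:
  assumes "i < n"
  shows "aux_pay n x strategy i v = p i (bids v) - payment_gap i v"
proof -
  let ?b = "bids v"
  have "p i (?b(i := 0)) = 0"
    using voluntary_participation bids_mem_bid_profiles assms
    unfolding voluntary_participation_def by blast
  then have "p i (?b(i := strategy i (v i))) - (x i (?b(i := strategy i (v i))) * v i
               - (LBINT z=0..v i. x i (?b(i := strategy i z))))
           = payment_gap i v"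
    unfolding payment_gap_def jump_coeff_def
    by (rule quantile_strategy_payment_identity[OF value_distribution[OF assms] prob_simplex[OF assms]])
  moreover have "?b(i := strategy i (v i)) = ?b"
    using assms by (auto simp: bid_profile_of_def)
  moreover have "aux_alloc n x strategy i (v(i := z)) = x i (?b(i := strategy i z))" for z
    using assms by (simp add: aux_alloc_def bids_fun_upd)
  moreover have "aux_alloc n x strategy i v = x i ?b"
    by (simp add: aux_alloc_def)
  ultimately show ?thesis
    unfolding aux_pay_def by simp
qed

lemma integral_payment_gap_fun_upd:
  assumes "i < n"
  shows "(\<integral>y. payment_gap i (v(i := y)) \<partial>D i) = directional_grad i v"
proof -
  interpret real_distribution "D i"
    using value_distribution[OF assms] by (rule value_distribution_real_distribution)
  have "payment_gap i (v(i := y))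
      = (\<Sum>j=1..K+1. if threshold i j < y then jump_coeff i (bids v) j else 0)" for y
    unfolding payment_gap_def bids_fun_upd[OF assms] jump_coeff_fun_upd by simp
  then have "(\<integral>y. payment_gap i (v(i := y)) \<partial>D i)
      = (\<integral>y. (\<Sum>j=1..K+1. if threshold i j < y then jump_coeff i (bids v) j else 0) \<partial>D i)"
    by simp
  also have "\<dots> = (\<Sum>j=1..K+1. jump_coeff i (bids v) j * (1 - cdf (D i) (threshold i j)))"
    by (rule integral_threshold_sum) simp
  also have "\<dots> = (\<Sum>j=1..K+1. jump_coeff i (bids v) j * (1 - cum (\<pi> i) j))"
    using cdf_quantile[OF value_distribution[OF assms]] cum_bounds[OF prob_simplex[OF assms]]
    by (intro sum.cong) auto
  also have "\<dots> = directional_grad i v"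
    unfolding jump_coeff_def
    by (rule grad_inner_unit_minus_weights[symmetric]) (rule cum_top[OF prob_simplex[OF assms]])
  finally show ?thesis .
qed

sublocale joint: prob_space "PiM {..<n} D"
  using value_distribution by (intro prob_space_PiM) (simp add: value_distribution_def)

lemma borel_measurable_component:
  assumes "i < n"
  shows "(\<lambda>v. v i) \<in> borel_measurable (PiM {..<n} D)"
proof -
  have "(\<lambda>v. v i) \<in> measurable (PiM {..<n} D) (D i)"
    using assms by (intro measurable_component_singleton) simp
  moreover have "sets (D i) = sets borel"
    using value_distribution[OF assms] by (simp add: value_distribution_def)
  ultimately show ?thesis
    by (simp cong: measurable_cong_sets)
qed

lemma measurable_bids: "bids \<in> measurable (PiM {..<n} D) (count_space (bid_profiles n K))"
proof -
  have "{v \<in> space (PiM {..<n} D). bids v = b} \<in> sets (PiM {..<n} D)" if b: "b \<in> bid_profiles n K" for b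
  proof -
    have "{v \<in> space (PiM {..<n} D). bids v = b}
        = {v \<in> space (PiM {..<n} D). \<forall>l\<in>{..<n}. strategy l (v l) = b l}"
      using b by (auto simp: bid_profile_of_def bid_profiles_def fun_eq_iff)
    also have "\<dots> \<in> sets (PiM {..<n} D)"
    proof (rule sets.sets_Collect_finite_All)
      fix l assume "l \<in> {..<n}"
      then have [measurable]: "(\<lambda>v. v l) \<in> borel_measurable (PiM {..<n} D)"
        by (simp add: borel_measurable_component)
      note borel_measurable_quantile_strategy [measurable]
      show "{v \<in> space (PiM {..<n} D). strategy l (v l) = b l} \<in> sets (PiM {..<n} D)"
        by measurable
    qed simp
    finally show ?thesis .
  qed
  then show ?thesis
    using bids_mem_bid_profiles
    by (auto simp: measurable_count_space_eq2[OF finite_bid_profiles] vimage_def Int_def conj_commute)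
qed

lemma borel_measurable_bids_comp: "(\<lambda>v. f (bids v)) \<in> borel_measurable (PiM {..<n} D)"
  by (rule measurable_compose[OF measurable_bids]) simp

lemma payment_bounds: "b \<in> bid_profiles n K \<Longrightarrow> i < n \<Longrightarrow> 0 \<le> p i b \<and> p i b \<le> 1"
  using auction_format unfolding auction_format_def by blast

lemma allocation_bounds:
  assumes "b \<in> bid_profiles n K" "i < n"
  shows "0 \<le> x i b \<and> x i b \<le> 1"
proof -
  have "\<forall>j<n. 0 \<le> x j b" "(\<Sum>j<n. x j b) \<le> 1"
    using auction_format assms(1) unfolding auction_format_def by auto
  moreover have "x i b \<le> (\<Sum>j<n. x j b)"
    using assms(2) \<open>\<forall>j<n. 0 \<le> x j b\<close> by (intro member_le_sum) auto
  ultimately show ?thesis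
    using assms(2) by auto
qed

lemma abs_jump_coeff_le:
  assumes b: "b \<in> bid_profiles n K" and i: "i < n" and j: "j \<le> K + 1"
  shows "\<bar>jump_coeff i b j\<bar> \<le> 2"
proof -
  have upd: "b(i := step_bid K l) \<in> bid_profiles n K" for l
    using fun_upd_mem_bid_profiles[OF b i step_bid_mem_bidset] .
  have "\<bar>bid_jump K (\<lambda>t. p i (b(i := t))) j\<bar> \<le> 1" "\<bar>bid_jump K (\<lambda>t. x i (b(i := t))) j\<bar> \<le> 1"
    using payment_bounds[OF upd i, of j] payment_bounds[OF upd i, of "j - 1"]
      allocation_bounds[OF upd i, of j] allocation_bounds[OF upd i, of "j - 1"]
    by (auto simp: bid_jump_def abs_le_iff)
  moreover have "\<bar>threshold i j\<bar> \<le> 1"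
    using quantile_bounds[OF value_distribution[OF i] cum_bounds(2)[OF prob_simplex[OF i] j]] by simp
  ultimately have "\<bar>bid_jump K (\<lambda>t. x i (b(i := t))) j * threshold i j\<bar> \<le> 1"
    unfolding abs_mult by (simp add: mult_le_one)
  with \<open>\<bar>bid_jump K (\<lambda>t. p i (b(i := t))) j\<bar> \<le> 1\<close> show ?thesis
    unfolding jump_coeff_def by linarith
qed

lemma integrable_payment: "i < n \<Longrightarrow> integrable (PiM {..<n} D) (\<lambda>v. p i (bids v))"
  using payment_bounds[OF bids_mem_bid_profiles]
  by (intro joint.integrable_const_bound[where B=1] borel_measurable_bids_comp) auto

lemma integrable_payment_gap: "i < n \<Longrightarrow> integrable (PiM {..<n} D) (payment_gap i)"
proof (intro joint.integrable_const_bound[where B="2 * (K + 1)"] AE_I2)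
  fix v assume "i < n"
  have "\<bar>payment_gap i v\<bar> \<le> (\<Sum>j=1..K+1. \<bar>if threshold i j < v i then jump_coeff i (bids v) j else 0\<bar>)"
    unfolding payment_gap_def by (rule sum_abs)
  also have "\<dots> \<le> (\<Sum>j=1..K+1. 2)"
    using abs_jump_coeff_le[OF bids_mem_bid_profiles \<open>i < n\<close>] by (intro sum_mono) auto
  finally show "norm (payment_gap i v) \<le> 2 * (K + 1)"
    by simp
next
  assume "i < n"
  then have [measurable]: "(\<lambda>v. v i) \<in> borel_measurable (PiM {..<n} D)"
    by (rule borel_measurable_component)
  note borel_measurable_bids_comp [measurable]
  show "payment_gap i \<in> borel_measurable (PiM {..<n} D)"
    unfolding payment_gap_def by measurable
qed

lemma integral_payment_gap:
  assumes "i < n"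
  shows "(\<integral>v. payment_gap i v \<partial>PiM {..<n} D) = (\<integral>v. directional_grad i v \<partial>PiM ({..<n} - {i}) D)"
proof -
  have "(\<integral>v. payment_gap i v \<partial>PiM {..<n} D)
      = (\<integral>v. (\<integral>y. payment_gap i (v(i := y)) \<partial>D i) \<partial>PiM ({..<n} - {i}) D)"
    using assms value_distribution integrable_payment_gap[OF assms]
    by (intro integral_PiM_fun_upd) (auto simp: value_distribution_def prob_space_imp_sigma_finite)
  then show ?thesis
    using assms by (simp add: integral_payment_gap_fun_upd)
qed

theorem sum_expected_directional_grad:
  "(\<Sum>i<n. \<integral>v. directional_grad i v \<partial>PiM ({..<n} - {i}) D)
   = (\<integral>v. (\<Sum>i<n. p i (bids v)) \<partial>PiM {..<n} D) - aux_revenue n x strategy D"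
proof -
  have "aux_revenue n x strategy D
      = (\<integral>v. (\<Sum>i<n. p i (bids v)) - (\<Sum>i<n. payment_gap i v) \<partial>PiM {..<n} D)"
    unfolding aux_revenue_def by (simp add: aux_pay_eq sum_subtractf)
  also have "\<dots> = (\<integral>v. (\<Sum>i<n. p i (bids v)) \<partial>PiM {..<n} D)
                  - (\<integral>v. (\<Sum>i<n. payment_gap i v) \<partial>PiM {..<n} D)"
    using integrable_payment integrable_payment_gap by (intro Bochner_Integration.integral_diff) auto
  also have "(\<integral>v. (\<Sum>i<n. payment_gap i v) \<partial>PiM {..<n} D) = (\<Sum>i<n. \<integral>v. payment_gap i v \<partial>PiM {..<n} D)"
    using integrable_payment_gap by (intro Bochner_Integration.integral_sum) auto
  finally show ?thesis
    by (simp add: integral_payment_gap)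
qed

end

theorem mainTheorem8:
  fixes n K :: nat
    and D :: "nat \<Rightarrow> real measure"
    and x p :: "nat \<Rightarrow> (nat \<Rightarrow> real) \<Rightarrow> real"
    and \<pi> :: "nat \<Rightarrow> nat \<Rightarrow> real"
  assumes K_pos: "0 < K"
    and D: "\<And>i. i < n \<Longrightarrow> value_distribution (D i)"
    and fmt: "auction_format n K x p"
    and vp: "voluntary_participation n K p"
    and strat: "\<And>i. i < n \<Longrightarrow> prob_simplex K (\<pi> i)"
  defines "s \<equiv> (\<lambda>l. quantile_strategy K (D l) (\<pi> l))"
    and "e \<equiv> (\<lambda>k::nat. if k = 1 then 1 else (0::real))"
  shows "(\<Sum>i<n. \<integral>v. (\<Sum>k=1..K+1. grad K x p (D i) (\<pi> i) i (bid_profile_of n s v) k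
                                     * (e k - \<pi> i k))
                  \<partial>(PiM ({..<n} - {i}) D))
         = (\<integral>v. (\<Sum>i<n. p i (bid_profile_of n s v)) \<partial>(PiM {..<n} D)) - aux_revenue n x s D"
proof -
  interpret quantile_bidding n K D x p \<pi>
    using D fmt vp strat by unfold_locales
  show ?thesis
    unfolding s_def e_def by (rule sum_expected_directional_grad)
qed

end
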